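(* Let $m,k$ be positive integers and let $G$ be a graph whose rank cardinality vector is $(1,m,k,1)$. Then the subgraph of $G$ induced by the vertices of corner rank 3 is connected.
   Context: All graphs are finite, nonempty, and reflexive (every vertex has a loop). $N[v]$ is the closed neighborhood of $v$ (including $v$). For distinct $v,w$, $w$ strictly corners $v$ if $N[v]\subsetneq N[w]$; $v$ is then a strict corner. Corner ranking: set $G^{(1)}=G$, $k=1$. If $G^{(k)}$ is a clique, give all its vertices rank $k$ and stop. Else if $G^{(k)}$ has no strict corners, give all its vertices rank $\infty$ and stop. Else give every strict corner of $G^{(k)}$ rank $k$, delete them to get $G^{(k+1)}$ (induced subgraph), increase $k$ and repeat. The corner rank of $G$ is the largest rank of a vertex; $X_k$ is the set of rank-$k$ vertices. The rank cardinality vector of a graph of finite corner rank $\alpha$ is $(x_\alpha,\dots,x_1)$ with $x_k=|X_k|$ (so here $|X_4|=1$, $|X_3|=m$, $|X_2|=k$, $|X_1|=1$). *)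

theory Defs
  imports Main
begin

text \<open>Induced subgraphs on S \<subseteq> V
use the same relation E restricted to S.\<close>

definition reflexive_graph :: "'a set \<Rightarrow> ('a \<Rightarrow> 'a \<Rightarrow> bool) \<Rightarrow> bool" where
  "reflexive_graph V E \<longleftrightarrow> finite V \<and> V \<noteq> {} \<and>
     (\<forall>v\<in>V. E v v) \<and> (\<forall>u\<in>V. \<forall>v\<in>V. E u v \<longrightarrow> E v u)"

definition cnbhd :: "('a \<Rightarrow> 'a \<Rightarrow> bool) \<Rightarrow> 'a set \<Rightarrow> 'a \<Rightarrow> 'a set" where
  "cnbhd E S v = {w \<in> S. E v w}"

definition strict_corner :: "('a \<Rightarrow> 'a \<Rightarrow> bool) \<Rightarrow> 'a set \<Rightarrow> 'a \<Rightarrow> bool" where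
  "strict_corner E S v \<longleftrightarrow> v \<in> S \<and>
     (\<exists>w\<in>S. w \<noteq> v \<and> cnbhd E S v \<subset> cnbhd E S w)"

definition is_clique :: "('a \<Rightarrow> 'a \<Rightarrow> bool) \<Rightarrow> 'a set \<Rightarrow> bool" where
  "is_clique E S \<longleftrightarrow> (\<forall>u\<in>S. \<forall>v\<in>S. E u v)"

text \<open>stage E V n is the vertex set of G^(n+1) (empty once the procedure has
stopped at a clique; unchanged forever once it stops with no strict corners).\<close>
fun stage :: "('a \<Rightarrow> 'a \<Rightarrow> bool) \<Rightarrow> 'a set \<Rightarrow> nat \<Rightarrow> 'a set" where
  "stage E V 0 = V"
| "stage E V (Suc n) =
     (let S = stage E V n in
      if is_clique E S then {} else {v \<in> S. \<not> strict_corner E S v})"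

text \<open>X_k, the set of vertices of (finite) rank k, for k \<ge> 1.\<close>
definition rank_set :: "('a \<Rightarrow> 'a \<Rightarrow> bool) \<Rightarrow> 'a set \<Rightarrow> nat \<Rightarrow> 'a set" where
  "rank_set E V k =
     (if k = 0 then {} else
      (let S = stage E V (k - 1) in
       if is_clique E S then S else {v \<in> S. strict_corner E S v}))"

text \<open>Every vertex receives a finite rank iff the procedure terminates at a clique,
i.e. some stage is empty.\<close>
definition finite_corner_rank :: "('a \<Rightarrow> 'a \<Rightarrow> bool) \<Rightarrow> 'a set \<Rightarrow> bool" where
  "finite_corner_rank E V \<longleftrightarrow> (\<exists>n. stage E V n = {})"

text \<open>The corner rank (largest rank of a vertex), for graphs of finite corner rank:
if G^(a) is the final clique then stage a is the first empty stage.\<close>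
definition corner_rank :: "('a \<Rightarrow> 'a \<Rightarrow> bool) \<Rightarrow> 'a set \<Rightarrow> nat" where
  "corner_rank E V = (LEAST n. stage E V n = {})"

definition connected_induced :: "('a \<Rightarrow> 'a \<Rightarrow> bool) \<Rightarrow> 'a set \<Rightarrow> bool" where
  "connected_induced E S \<longleftrightarrow> S \<noteq> {} \<and>
     (\<forall>u\<in>S. \<forall>v\<in>S. (u, v) \<in> {(x, y). x \<in> S \<and> y \<in> S \<and> E x y}\<^sup>*)"

end

theory Submission
  imports Defs
begin

text \<open>Let \<open>y\<close> be the unique vertex of rank 1 and \<open>z\<close> the unique vertex of rank 4. Every
vertex \<open>t\<close> of rank 3 is strictly cornered in \<open>G^(3)\<close> by \<open>z\<close>; since \<open>t\<close> is no corner of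
\<open>G^(2)\<close>, this domination must be broken by a rank-2 vertex \<open>p\<close> adjacent to \<open>t\<close> but
not to \<open>z\<close>. In turn \<open>p\<close> is strictly cornered in \<open>G^(2)\<close> by a non-corner \<open>w\<close>, which is
again of rank 3 and adjacent to \<open>t\<close>; as \<open>p\<close> is no corner of \<open>G\<close>, it must be adjacent to
\<open>y\<close>. The vertex \<open>y\<close> is dominated by a vertex of \<open>G^(2)\<close>, which is dominated by a
vertex of \<open>G^(3)\<close>, so any two such \<open>p, p'\<close> have a common rank-3 neighbour. This
gives a path of length at most 4 between any two vertices of rank 3.\<close>

definition corners :: "('a \<Rightarrow> 'a \<Rightarrow> bool) \<Rightarrow> 'a set \<Rightarrow> 'a set" where
  "corners E T = {v \<in> T. strict_corner E T v}"

definition noncorners :: "('a \<Rightarrow> 'a \<Rightarrow> bool) \<Rightarrow> 'a set \<Rightarrow> 'a set" where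
  "noncorners E T = {v \<in> T. \<not> strict_corner E T v}"

lemma noncorners_subset: "noncorners E T \<subseteq> T"
  by (auto simp: noncorners_def)

lemma corners_subset: "corners E T \<subseteq> T"
  by (auto simp: corners_def)

lemma diff_noncorners_eq_corners: "T - noncorners E T = corners E T"
  by (auto simp: corners_def noncorners_def)

lemma strict_corner_dominated_by_noncorner:
  assumes "finite T" "strict_corner E T x"
  shows "\<exists>w\<in>noncorners E T. cnbhd E T x \<subset> cnbhd E T w"
proof -
  define M where "M = {w\<in>T. cnbhd E T x \<subset> cnbhd E T w}"
  have "M \<noteq> {}" "finite M"
    using assms by (auto simp: strict_corner_def M_def)
  then have "Max ((\<lambda>w. card (cnbhd E T w)) ` M) \<in> (\<lambda>w. card (cnbhd E T w)) ` M"
    by (intro Max_in) auto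
  then obtain w where w: "w \<in> M" "card (cnbhd E T w) = Max ((\<lambda>w. card (cnbhd E T w)) ` M)"
    by auto
  have max: "card (cnbhd E T w') \<le> card (cnbhd E T w)" if "w' \<in> M" for w'
    using w(2) that \<open>finite M\<close> by simp
  have "\<not> strict_corner E T w"
  proof
    assume "strict_corner E T w"
    then obtain w' where w': "w' \<in> T" "cnbhd E T w \<subset> cnbhd E T w'"
      by (auto simp: strict_corner_def)
    then have "w' \<in> M" using w(1) by (auto simp: M_def)
    moreover have "card (cnbhd E T w) < card (cnbhd E T w')"
      using w'(2) assms(1) by (intro psubset_card_mono) (auto simp: cnbhd_def)
    ultimately show False using max by fastforce
  qed
  with w(1) show ?thesis by (auto simp: M_def noncorners_def)
qed

lemma exists_noncorner_dominating:
  assumes "finite T" "x \<in> T"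
  shows "\<exists>w\<in>noncorners E T. cnbhd E T x \<subseteq> cnbhd E T w"
proof (cases "strict_corner E T x")
  case True
  then show ?thesis using strict_corner_dominated_by_noncorner[OF assms(1)] by blast
next
  case False
  then show ?thesis using assms(2) by (auto simp: noncorners_def)
qed

lemma noncorners_nonempty:
  assumes "finite T" "T \<noteq> {}"
  shows "noncorners E T \<noteq> {}"
  using exists_noncorner_dominating[OF assms(1)] assms(2) by blast

lemma domination_escapes_subgraph:
  assumes "S \<subseteq> T" "x \<in> noncorners E T" "z \<in> T" "cnbhd E S x \<subset> cnbhd E S z"
  shows "\<exists>p\<in>T - S. E x p \<and> \<not> E z p"
proof (rule ccontr)
  assume no_escape: "\<not> ?thesis"
  have "cnbhd E T x \<subseteq> cnbhd E T z"
    using assms(1,4) no_escape by (auto simp: cnbhd_def)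
  moreover have "cnbhd E T z \<noteq> cnbhd E T x"
    using assms(1,4) by (auto simp: cnbhd_def)
  moreover have "z \<noteq> x" using assms(4) by blast
  ultimately have "strict_corner E T x"
    using assms(2,3) by (auto simp: strict_corner_def noncorners_def)
  with assms(2) show False by (simp add: noncorners_def)
qed

lemma stage_subset: "stage E V n \<subseteq> V"
  by (induction n) (auto simp: Let_def)

lemma stage_Suc_eq_noncorners:
  assumes "stage E V (Suc n) \<noteq> {}"
  shows "stage E V (Suc n) = noncorners E (stage E V n)"
  using assms by (auto simp: Let_def noncorners_def split: if_splits)

lemma rank_set_Suc_eq_corners:
  assumes "stage E V (Suc n) \<noteq> {}"
  shows "rank_set E V (Suc n) = corners E (stage E V n)"
  using assms by (auto simp: Let_def rank_set_def corners_def split: if_splits)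

lemma rank_set_last:
  assumes "finite V" "stage E V n \<noteq> {}" "stage E V (Suc n) = {}"
  shows "rank_set E V (Suc n) = stage E V n"
proof -
  have "finite (stage E V n)"
    using assms(1) stage_subset by (rule finite_subset[rotated])
  then have "noncorners E (stage E V n) \<noteq> {}"
    using assms(2) by (rule noncorners_nonempty)
  then have "is_clique E (stage E V n)"
    using assms(3) by (auto simp: Let_def noncorners_def split: if_splits)
  then show ?thesis by (simp add: rank_set_def)
qed

lemma stage_corner_rank:
  assumes "finite_corner_rank E V"
  shows "stage E V (corner_rank E V) = {}"
  using assms LeastI_ex[of "\<lambda>n. stage E V n = {}"]
  by (simp add: finite_corner_rank_def corner_rank_def)

lemma stage_below_corner_rank:
  assumes "n < corner_rank E V"
  shows "stage E V n \<noteq> {}"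
  using assms not_less_Least by (auto simp: corner_rank_def)

text \<open>\<open>V2\<close> and \<open>V3\<close> below are the vertex sets of \<open>G^(2)\<close> and \<open>G^(3)\<close>.\<close>

locale corner_tower =
  fixes E :: "'a \<Rightarrow> 'a \<Rightarrow> bool" and V :: "'a set" and y z :: 'a
  assumes graph: "reflexive_graph V E"
    and unique_corner: "corners E V = {y}"
    and unique_apex: "noncorners E (noncorners E (noncorners E V)) = {z}"
begin

abbreviation "V2 \<equiv> noncorners E V"
abbreviation "V3 \<equiv> noncorners E V2"

lemma finite_V: "finite V"
  using graph by (simp add: reflexive_graph_def)

lemma V3_subset_V2: "V3 \<subseteq> V2" and V2_subset_V: "V2 \<subseteq> V"
  by (rule noncorners_subset)+

lemma finite_V2: "finite V2" and finite_V3: "finite V3"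
  using finite_V V2_subset_V V3_subset_V2 by (auto intro: finite_subset)

lemma refl: "v \<in> V \<Longrightarrow> E v v"
  using graph by (simp add: reflexive_graph_def)

lemma sym: "E u v \<Longrightarrow> u \<in> V \<Longrightarrow> v \<in> V \<Longrightarrow> E v u"
  using graph by (auto simp: reflexive_graph_def)

lemma y_in_V: "y \<in> V"
  using unique_corner corners_subset[of E V] by blast

lemma z_in_V3: "z \<in> V3"
  using unique_apex noncorners_subset[of E V3] by blast

lemma V3_eq: "V3 = insert z (corners E V3)"
  using unique_apex by (auto simp: corners_def noncorners_def)

lemma corner_V3_dominated_by_apex:
  assumes "t \<in> corners E V3"
  shows "cnbhd E V3 t \<subset> cnbhd E V3 z"
proof -
  obtain w where "w \<in> noncorners E V3" "cnbhd E V3 t \<subset> cnbhd E V3 w"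
    using strict_corner_dominated_by_noncorner[OF finite_V3, of E t] assms by (auto simp: corners_def)
  moreover have "w = z" using \<open>w \<in> noncorners E V3\<close> unique_apex by blast
  ultimately show ?thesis by blast
qed

lemma corner_V3_hub:
  assumes t: "t \<in> corners E V3"
  obtains p w where "p \<in> V2" "w \<in> corners E V3" "E w t" "E p y" "\<not> E z p"
    "cnbhd E V2 p \<subseteq> cnbhd E V2 w"
proof -
  have t_V3: "t \<in> V3" using t corners_subset[of E V3] by blast
  have z_V2: "z \<in> V2" using z_in_V3 V3_subset_V2 by blast
  obtain p where p: "p \<in> V2 - V3" "E t p" "\<not> E z p"
    using domination_escapes_subgraph[OF V3_subset_V2 t_V3 z_V2 corner_V3_dominated_by_apex[OF t]]
    by blast
  have "strict_corner E V2 p" using p(1) by (auto simp: noncorners_def)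
  then obtain w where w: "w \<in> V3" "cnbhd E V2 p \<subset> cnbhd E V2 w"
    using strict_corner_dominated_by_noncorner[OF finite_V2, of E p] by blast
  have p_V: "p \<in> V" and w_V: "w \<in> V" and t_V2: "t \<in> V2"
    using p(1) w(1) t_V3 V3_subset_V2 V2_subset_V by auto
  obtain q where "q \<in> V - V2" "E p q"
    using domination_escapes_subgraph[OF V2_subset_V _ w_V w(2)] p(1) by blast
  then have "E p y" using unique_corner diff_noncorners_eq_corners[of V E] by simp
  have "t \<in> cnbhd E V2 p" "p \<in> cnbhd E V2 p"
    using t_V2 p(1) sym[OF p(2)] refl[OF p_V] t_V3 V3_subset_V2 V2_subset_V
    by (auto simp: cnbhd_def)
  then have "E w t" "E w p" using w(2) by (auto simp: cnbhd_def)
  then have "w \<in> corners E V3" using w(1) p(3) V3_eq by auto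
  with p w \<open>E p y\<close> \<open>E w t\<close> show thesis by (intro that) auto
qed

lemma common_neighbour_in_V3:
  assumes "p \<in> V2" "q \<in> V2" "E p y" "E q y"
  obtains w where "w \<in> V3" "E w p" "E w q"
proof -
  obtain w0 where w0: "w0 \<in> V2" "cnbhd E V y \<subseteq> cnbhd E V w0"
    using exists_noncorner_dominating[OF finite_V y_in_V] by blast
  have "p \<in> V" "q \<in> V" using assms(1,2) V2_subset_V by auto
  then have "p \<in> cnbhd E V y" "q \<in> cnbhd E V y"
    using sym[OF assms(3)] sym[OF assms(4)] y_in_V by (auto simp: cnbhd_def)
  then have "p \<in> cnbhd E V2 w0" "q \<in> cnbhd E V2 w0"
    using w0(2) assms(1,2) by (auto simp: cnbhd_def)
  moreover obtain w where "w \<in> V3" "cnbhd E V2 w0 \<subseteq> cnbhd E V2 w"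
    using exists_noncorner_dominating[OF finite_V2 w0(1)] by blast
  ultimately show thesis using that by (auto simp: cnbhd_def)
qed

lemma corners_V3_connected:
  assumes "corners E V3 \<noteq> {}"
  shows "connected_induced E (corners E V3)"
  unfolding connected_induced_def
proof (intro conjI ballI assms)
  let ?X = "corners E V3"
  let ?R = "{(a, b). a \<in> ?X \<and> b \<in> ?X \<and> E a b}"
  have X_V2: "?X \<subseteq> V2" using corners_subset[of E V3] V3_subset_V2 by blast
  then have X_V: "?X \<subseteq> V" using V2_subset_V by blast
  fix u v assume u: "u \<in> ?X" and v: "v \<in> ?X"
  obtain pu wu where hu: "pu \<in> V2" "wu \<in> ?X" "E wu u" "E pu y" "\<not> E z pu"
    "cnbhd E V2 pu \<subseteq> cnbhd E V2 wu" using corner_V3_hub[OF u] .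
  obtain pv wv where hv: "pv \<in> V2" "wv \<in> ?X" "E wv v" "E pv y" "\<not> E z pv"
    "cnbhd E V2 pv \<subseteq> cnbhd E V2 wv" using corner_V3_hub[OF v] .
  obtain w where w: "w \<in> V3" "E w pu" "E w pv"
    using common_neighbour_in_V3[OF hu(1) hv(1) hu(4) hv(4)] .
  have w_X: "w \<in> ?X" using w(1,2) hu(5) V3_eq by auto
  have "w \<in> V" "pu \<in> V" "pv \<in> V" using w_X X_V hu(1) hv(1) V2_subset_V by auto
  then have "w \<in> cnbhd E V2 pu" "w \<in> cnbhd E V2 pv"
    using sym[OF w(2)] sym[OF w(3)] w_X X_V2 by (auto simp: cnbhd_def)
  then have "E wu w" "E wv w" using hu(6) hv(6) by (auto simp: cnbhd_def)
  moreover have "E u wu" using sym[OF hu(3)] hu(2) u X_V by blast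
  moreover have "E w wv" using sym[OF \<open>E wv w\<close>] hv(2) w_X X_V by blast
  ultimately have "(u, wu) \<in> ?R" "(wu, w) \<in> ?R" "(w, wv) \<in> ?R" "(wv, v) \<in> ?R"
    using u v hu(2) hv(2,3) w_X by auto
  then show "(u, v) \<in> ?R\<^sup>*" by (meson converse_rtrancl_into_rtrancl r_into_rtrancl)
qed

end

theorem theorem3p24:
  fixes V :: "'a set" and E :: "'a \<Rightarrow> 'a \<Rightarrow> bool" and m k :: nat
  assumes "reflexive_graph V E"
    and "m > 0" and "k > 0"
    and "finite_corner_rank E V"
    and "corner_rank E V = 4"
    and "card (rank_set E V 4) = 1"
    and "card (rank_set E V 3) = m"
    and "card (rank_set E V 2) = k"
    and "card (rank_set E V 1) = 1"
  shows "connected_induced E (rank_set E V 3)"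
proof -
  have stages: "stage E V 1 \<noteq> {}" "stage E V 2 \<noteq> {}" "stage E V 3 \<noteq> {}" "stage E V 4 = {}"
    using stage_below_corner_rank[of _ E V] stage_corner_rank[OF assms(4)] assms(5)
    by (simp_all del: stage.simps)
  have "finite V" using assms(1) by (simp add: reflexive_graph_def)
  have Suc_numerals: "Suc 0 = 1" "Suc 1 = 2" "Suc 2 = 3" "Suc 3 = 4" by simp_all
  have V2: "stage E V 1 = noncorners E V"
    using stage_Suc_eq_noncorners[of E V 0, unfolded Suc_numerals stage.simps(1)] stages(1) by blast
  have V3: "stage E V 2 = noncorners E (noncorners E V)"
    using stage_Suc_eq_noncorners[of E V 1, unfolded Suc_numerals V2] stages(2) by blast
  have V4: "stage E V 3 = noncorners E (noncorners E (noncorners E V))"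
    using stage_Suc_eq_noncorners[of E V 2, unfolded Suc_numerals V3] stages(3) by blast
  have X1: "rank_set E V 1 = corners E V"
    using rank_set_Suc_eq_corners[of E V 0, unfolded Suc_numerals stage.simps(1)] stages(1) by blast
  have X3: "rank_set E V 3 = corners E (noncorners E (noncorners E V))"
    using rank_set_Suc_eq_corners[of E V 2, unfolded Suc_numerals V3] stages(3) by blast
  have X4: "rank_set E V 4 = noncorners E (noncorners E (noncorners E V))"
    using rank_set_last[OF \<open>finite V\<close>, of E 3, unfolded Suc_numerals V4] stages(3,4) V4 by blast
  obtain y where "corners E V = {y}" using assms(9) X1 card_1_singletonE by metis
  moreover obtain z where "noncorners E (noncorners E (noncorners E V)) = {z}"
    using assms(6) X4 card_1_singletonE by metis
  ultimately interpret corner_tower E V y z using assms(1) by unfold_locales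
  \<comment> \<open>Of the cardinality hypotheses only \<open>m > 0\<close> matters.\<close>
  have "rank_set E V 3 \<noteq> {}" using assms(2,7) by auto
  then show ?thesis using corners_V3_connected X3 by simp
qed

end
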